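(* The expected number of C3's (directed 3-cycles on three distinct vertices, counted up to cyclic rotation) in the OSW graph $G_n$ is $\Theta(n^2)$.
   Context: For an integer $n\ge1$, the $n$-octahedral graph $G'_n=(V,E')$ is the undirected graph with vertex set $V=\{u\in\mathbb{Z}^3:|u_1|+|u_2|+|u_3|=n\}$ and edge set $E'=\{\{v,w\}\subset V: v\neq w,\ |v_i-w_i|\le 1 \text{ for all } i=1,2,3\}$. For $u,v\in V$, $d_{uv}$ denotes the shortest-path distance in $G'_n$, and $Z_u=\left(\sum_{w\in V\setminus\{u\}} d_{uw}^{-2}\right)^{-1}$. The OSW random graph $G_n=(V,E)$ is the directed graph in which, for every $\{u,v\}\in E'$, both $(u,v),(v,u)\in E$, and in addition each vertex $u\in V$, independently of the others, chooses one vertex $v\in V\setminus\{u\}$ with probability $Z_u d_{uv}^{-2}$ and the long-range edge $(u,v)$ is added to $E$. *)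

theory Defs
  imports Complex_Main "HOL-Library.Landau_Symbols" "HOL-Library.FuncSet"
begin

type_synonym pt = "int \<times> int \<times> int"

definition octV :: "nat \<Rightarrow> pt set" where
  "octV n = {(a,b,c). \<bar>a\<bar> + \<bar>b\<bar> + \<bar>c\<bar> = int n}"

definition octAdj :: "nat \<Rightarrow> pt \<Rightarrow> pt \<Rightarrow> bool" where
  "octAdj n u v \<longleftrightarrow> u \<in> octV n \<and> v \<in> octV n \<and> u \<noteq> v \<and>
     \<bar>fst u - fst v\<bar> \<le> 1 \<and> \<bar>fst (snd u) - fst (snd v)\<bar> \<le> 1 \<and>
     \<bar>snd (snd u) - snd (snd v)\<bar> \<le> 1"

definition octDist :: "nat \<Rightarrow> pt \<Rightarrow> pt \<Rightarrow> nat" where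
  "octDist n u v = (LEAST k. (u, v) \<in> {(x, y). octAdj n x y} ^^ k)"

definition octZ :: "nat \<Rightarrow> pt \<Rightarrow> real" where
  "octZ n u = inverse (\<Sum>w\<in>octV n - {u}. 1 / (real (octDist n u w))\<^sup>2)"

text \<open>Probability that u chooses v as the head of its long-range edge.\<close>
definition lrProb :: "nat \<Rightarrow> pt \<Rightarrow> pt \<Rightarrow> real" where
  "lrProb n u v = octZ n u / (real (octDist n u v))\<^sup>2"

text \<open>Outcomes of the randomness: each vertex u chooses f u \<in> V - {u}.
  Probability of an outcome = product of independent choice probabilities.\<close>
definition choices :: "nat \<Rightarrow> (pt \<Rightarrow> pt) set" where
  "choices n = (\<Pi>\<^sub>E u\<in>octV n. octV n - {u})"

definition choiceProb :: "nat \<Rightarrow> (pt \<Rightarrow> pt) \<Rightarrow> real" where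
  "choiceProb n f = (\<Prod>u\<in>octV n. lrProb n u (f u))"

definition oswArc :: "nat \<Rightarrow> (pt \<Rightarrow> pt) \<Rightarrow> pt \<Rightarrow> pt \<Rightarrow> bool" where
  "oswArc n f u v \<longleftrightarrow> octAdj n u v \<or> (u \<in> octV n \<and> f u = v)"

text \<open>Number of directed 3-cycles on distinct vertices, counted up to cyclic
  rotation (ordered triples divided by 3).\<close>
definition numC3 :: "nat \<Rightarrow> (pt \<Rightarrow> pt) \<Rightarrow> real" where
  "numC3 n f = real (card {(u, v, w). u \<in> octV n \<and> v \<in> octV n \<and> w \<in> octV n \<and>
       u \<noteq> v \<and> v \<noteq> w \<and> u \<noteq> w \<and>
       oswArc n f u v \<and> oswArc n f v w \<and> oswArc n f w u}) / 3"

definition expC3 :: "nat \<Rightarrow> real" where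
  "expC3 n = (\<Sum>f\<in>choices n. choiceProb n f * numC3 n f)"

end

theory Submission
  imports Defs
begin

text \<open>The number of C3's is bounded deterministically, for every outcome of the long-range
  choices. From below: for a \<ge> 0, b \<ge> 1, c = n - a - b \<ge> 1, the points (a,b,c), (a+1,b-1,c),
  (a+1,b,c-1) are pairwise adjacent in G'_n, so they span a C3 already without long-range
  edges, and there are \<Omega>(n^2) such triangles. From above: every arc out of u ends in the
  3x3x3 box around u or at the long-range target of u, so at most 28^2 directed triangles
  start at any vertex, while |V| = O(n^2). Averaging over the outcomes preserves both bounds.\<close>

lemma sum_weighted_bounds:
  fixes p X :: "'a \<Rightarrow> real"
  assumes "\<And>x. x \<in> A \<Longrightarrow> p x \<ge> 0" and "sum p A = 1"
    and "\<And>x. x \<in> A \<Longrightarrow> L \<le> X x" and "\<And>x. x \<in> A \<Longrightarrow> X x \<le> U"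
  shows "L \<le> (\<Sum>x\<in>A. p x * X x)" and "(\<Sum>x\<in>A. p x * X x) \<le> U"
proof -
  have "L = (\<Sum>x\<in>A. p x * L)"
    using assms(2) by (simp add: sum_distrib_right[symmetric])
  also have "\<dots> \<le> (\<Sum>x\<in>A. p x * X x)"
    using assms by (intro sum_mono mult_left_mono) auto
  finally show "L \<le> (\<Sum>x\<in>A. p x * X x)" .
  have "(\<Sum>x\<in>A. p x * X x) \<le> (\<Sum>x\<in>A. p x * U)"
    using assms by (intro sum_mono mult_left_mono) auto
  also have "\<dots> = U"
    using assms(2) by (simp add: sum_distrib_right[symmetric])
  finally show "(\<Sum>x\<in>A. p x * X x) \<le> U" .
qed

lemma finite_octV: "finite (octV n)"
proof -
  have "octV n \<subseteq> {-int n..int n} \<times> {-int n..int n} \<times> {-int n..int n}"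
    by (auto simp: octV_def)
  then show ?thesis by (rule finite_subset) auto
qed

lemma card_octV_le: "card (octV n) \<le> 3 * (2 * n + 1)\<^sup>2"
proof -
  \<comment> \<open>On octV n the last coordinate is determined by the first two up to its sign.\<close>
  let ?g = "\<lambda>(a::int, b::int, c::int). (a, b, sgn c)"
  have inj: "inj_on ?g (octV n)"
    by (auto simp: inj_on_def octV_def sgn_if abs_if split: if_splits)
  have sub: "?g ` octV n \<subseteq> {-int n..int n} \<times> {-int n..int n} \<times> {-1..1}"
    by (auto simp: octV_def sgn_if)
  have "card (octV n) = card (?g ` octV n)"
    using card_image[OF inj] by simp
  also have "\<dots> \<le> card ({-int n..int n} \<times> {-int n..int n} \<times> {-1..(1::int)})"
    by (rule card_mono[OF _ sub]) auto
  also have "\<dots> = (2 * n + 1) * ((2 * n + 1) * 3)"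
  proof -
    have "nat (2 * int n + 1) = 2 * n + 1" by simp
    then show ?thesis by (simp add: card_cartesian_product)
  qed
  finally show ?thesis by (simp add: power2_eq_square algebra_simps)
qed

lemma octDist_octAdj:
  assumes "octAdj n u v"
  shows "octDist n u v = 1"
  unfolding octDist_def
proof (rule Least_equality)
  show "(u, v) \<in> {(x, y). octAdj n x y} ^^ 1" using assms by simp
next
  fix k assume "(u, v) \<in> {(x, y). octAdj n x y} ^^ k"
  moreover have "u \<noteq> v" using assms by (simp add: octAdj_def)
  ultimately show "1 \<le> k" by (cases k) auto
qed

lemma ex_octAdj:
  assumes "u \<in> octV n" and "n \<ge> 1"
  shows "\<exists>v. octAdj n u v"
proof -
  obtain a b c where u: "u = (a, b, c)" by (cases u) auto
  consider "a \<noteq> 0" | "a = 0" "b \<noteq> 0" | "a = 0" "b = 0" by blast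
  then show ?thesis
  proof cases
    case 1
    then have "octAdj n u (a - sgn a, b + (if b \<ge> 0 then 1 else -1), c)"
      using assms u by (auto simp: octAdj_def octV_def sgn_if abs_if)
    then show ?thesis by blast
  next
    case 2
    then have "octAdj n u (1, b - sgn b, c)"
      using assms u by (auto simp: octAdj_def octV_def sgn_if abs_if)
    then show ?thesis by blast
  next
    case 3
    then have "octAdj n u (1, 0, c - sgn c)"
      using assms u by (auto simp: octAdj_def octV_def sgn_if abs_if)
    then show ?thesis by blast
  qed
qed

lemma lrProb_nonneg: "lrProb n u v \<ge> 0"
  unfolding lrProb_def octZ_def by (auto intro!: divide_nonneg_nonneg sum_nonneg)

lemma sum_lrProb:
  assumes "u \<in> octV n" and "n \<ge> 1"
  shows "(\<Sum>v\<in>octV n - {u}. lrProb n u v) = 1"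
proof -
  let ?S = "\<Sum>w\<in>octV n - {u}. 1 / (real (octDist n u w))\<^sup>2"
  \<comment> \<open>A neighbour contributes 1 to ?S, so octZ n u is not the junk value inverse 0.\<close>
  obtain v where v: "octAdj n u v" using ex_octAdj[OF assms] by blast
  then have "v \<in> octV n - {u}" by (auto simp: octAdj_def)
  then have "1 / (real (octDist n u v))\<^sup>2 \<le> ?S"
    by (intro member_le_sum) (auto intro: finite_octV)
  then have S: "?S \<ge> 1" using octDist_octAdj[OF v] by simp
  have "(\<Sum>v\<in>octV n - {u}. lrProb n u v) = octZ n u * ?S"
    unfolding lrProb_def by (simp add: sum_distrib_left divide_inverse)
  also have "\<dots> = 1" using S unfolding octZ_def by simp
  finally show ?thesis .
qed

lemma choiceProb_nonneg: "choiceProb n f \<ge> 0"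
  unfolding choiceProb_def by (auto intro!: prod_nonneg lrProb_nonneg)

lemma sum_choiceProb:
  assumes "n \<ge> 1"
  shows "(\<Sum>f\<in>choices n. choiceProb n f) = 1"
proof -
  have "(\<Sum>f\<in>choices n. choiceProb n f) = (\<Prod>u\<in>octV n. \<Sum>v\<in>octV n - {u}. lrProb n u v)"
    unfolding choices_def choiceProb_def
    by (rule prod_sum_PiE[symmetric]) (auto intro: finite_octV)
  also have "\<dots> = 1" using sum_lrProb[OF _ assms] by simp
  finally show ?thesis .
qed

definition c3Triples :: "nat \<Rightarrow> (pt \<Rightarrow> pt) \<Rightarrow> (pt \<times> pt \<times> pt) set" where
  "c3Triples n f = {(u, v, w). u \<in> octV n \<and> v \<in> octV n \<and> w \<in> octV n \<and>
       u \<noteq> v \<and> v \<noteq> w \<and> u \<noteq> w \<and>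
       oswArc n f u v \<and> oswArc n f v w \<and> oswArc n f w u}"

lemma numC3_eq_card_c3Triples: "numC3 n f = real (card (c3Triples n f)) / 3"
  unfolding numC3_def c3Triples_def ..

definition unitBox :: "pt \<Rightarrow> pt set" where
  "unitBox u = {fst u - 1 .. fst u + 1} \<times> {fst (snd u) - 1 .. fst (snd u) + 1}
     \<times> {snd (snd u) - 1 .. snd (snd u) + 1}"

definition arcTargets :: "(pt \<Rightarrow> pt) \<Rightarrow> pt \<Rightarrow> pt set" where
  "arcTargets f u = insert (f u) (unitBox u)"

lemma finite_arcTargets: "finite (arcTargets f u)"
  by (simp add: arcTargets_def unitBox_def)

lemma card_arcTargets_le: "card (arcTargets f u) \<le> 28"
proof -
  have "card (arcTargets f u) \<le> Suc (card (unitBox u))"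
    unfolding arcTargets_def by (rule card_insert_le_m1) (simp_all add: unitBox_def)
  then show ?thesis by (simp add: unitBox_def card_cartesian_product)
qed

lemma oswArc_in_arcTargets:
  assumes "oswArc n f u v"
  shows "v \<in> arcTargets f u"
proof (cases "octAdj n u v")
  case True
  then have "v \<in> unitBox u"
    by (cases u; cases v) (auto simp: octAdj_def unitBox_def abs_le_iff)
  then show ?thesis by (simp add: arcTargets_def)
next
  case False
  then show ?thesis using assms by (simp add: oswArc_def arcTargets_def)
qed

lemma card_c3Triples_le: "card (c3Triples n f) \<le> 28 * 28 * card (octV n)"
proof -
  let ?P = "Sigma (octV n) (\<lambda>u. Sigma (arcTargets f u) (arcTargets f))"
  have "c3Triples n f \<subseteq> ?P"
    unfolding c3Triples_def using oswArc_in_arcTargets by blast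
  moreover have "finite ?P"
    using finite_octV finite_arcTargets by (intro finite_SigmaI) auto
  ultimately have "card (c3Triples n f) \<le> card ?P"
    by (rule card_mono[rotated])
  also have "\<dots> = (\<Sum>u\<in>octV n. \<Sum>v\<in>arcTargets f u. card (arcTargets f v))"
    using finite_octV finite_arcTargets by (simp add: card_SigmaI)
  also have "\<dots> \<le> (\<Sum>u\<in>octV n. \<Sum>v\<in>arcTargets f u. 28)"
    by (intro sum_mono card_arcTargets_le)
  also have "\<dots> \<le> (\<Sum>u\<in>octV n. 28 * 28)"
    by (intro sum_mono) (use card_arcTargets_le in auto)
  finally show ?thesis by simp
qed

lemma card_c3Triples_ge: "(n div 2)\<^sup>2 \<le> card (c3Triples n f)"
proof -
  define k where "k = n div 2"
  define tri where "tri = (\<lambda>(a::nat, b::nat). let c = int n - int a - int b in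
      ((int a, int b, c), (int a + 1, int b - 1, c), (int a + 1, int b, c - 1)))"
  have "inj_on tri ({0..<k} \<times> {1..k})"
    by (auto simp: inj_on_def tri_def Let_def)
  then have "k * k = card (tri ` ({0..<k} \<times> {1..k}))"
    by (simp add: card_image card_cartesian_product)
  also have "\<dots> \<le> card (c3Triples n f)"
  proof (rule card_mono)
    have "c3Triples n f \<subseteq> octV n \<times> octV n \<times> octV n"
      by (auto simp: c3Triples_def)
    then show "finite (c3Triples n f)"
      by (rule finite_subset) (intro finite_SigmaI finite_octV)
    show "tri ` ({0..<k} \<times> {1..k}) \<subseteq> c3Triples n f"
    proof
      fix t assume "t \<in> tri ` ({0..<k} \<times> {1..k})"
      then obtain a b where "a < k" "1 \<le> b" "b \<le> k" and t: "t = tri (a, b)" by auto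
      then have "int n - int a - int b \<ge> 1" unfolding k_def by linarith
      with \<open>1 \<le> b\<close> show "t \<in> c3Triples n f" unfolding t
        by (simp add: tri_def Let_def c3Triples_def oswArc_def octAdj_def octV_def)
    qed
  qed
  finally show ?thesis by (simp add: k_def power2_eq_square)
qed

lemma expC3_bounds:
  assumes "n \<ge> 1"
  shows "real ((n div 2)\<^sup>2) / 3 \<le> expC3 n"
    and "expC3 n \<le> real (28 * 28 * card (octV n)) / 3"
proof -
  have "real ((n div 2)\<^sup>2) / 3 \<le> numC3 n f"
    and "numC3 n f \<le> real (28 * 28 * card (octV n)) / 3" for f
    unfolding numC3_eq_card_c3Triples of_nat_le_iff[symmetric]
    by (simp_all only: divide_right_mono of_nat_le_iff card_c3Triples_ge card_c3Triples_le)
  then show "real ((n div 2)\<^sup>2) / 3 \<le> expC3 n"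
    and "expC3 n \<le> real (28 * 28 * card (octV n)) / 3"
    unfolding expC3_def
    using sum_weighted_bounds[OF choiceProb_nonneg sum_choiceProb[OF assms]] by blast+
qed

lemma expC3_ge_quadratic:
  assumes "n \<ge> 2"
  shows "real n ^ 2 / 48 \<le> expC3 n"
proof -
  have "n \<le> 2 * (n div 2) + 1" by linarith
  then have "real n / 4 \<le> real (n div 2)" using assms by linarith
  then have "(real n / 4)\<^sup>2 \<le> (real (n div 2))\<^sup>2" by (rule power_mono) simp
  then show ?thesis
    using expC3_bounds(1)[of n] assms by (simp add: power_divide)
qed

lemma expC3_le_quadratic:
  assumes "n \<ge> 1"
  shows "expC3 n \<le> 27 * 28 * 28 * real n ^ 2"
proof -
  have "real (card (octV n)) \<le> real (3 * (2 * n + 1)\<^sup>2)"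
    using card_octV_le[of n] by (simp only: of_nat_le_iff)
  also have "\<dots> = 3 * (2 * real n + 1)\<^sup>2" by simp
  also have "\<dots> \<le> 3 * (3 * real n)\<^sup>2"
    using assms by (intro mult_left_mono power_mono) auto
  finally have "real (card (octV n)) \<le> 27 * real n ^ 2"
    by (simp add: power_mult_distrib)
  then show ?thesis
    using expC3_bounds(2)[OF assms] by simp
qed

theorem corollary1:
  shows "expC3 \<in> \<Theta>(\<lambda>n. real n ^ 2)"
proof (rule bigthetaI'[of "1/48" "27 * 28 * 28"])
  show "\<forall>\<^sub>F n in at_top. 1/48 * norm (real n ^ 2) \<le> norm (expC3 n) \<and>
          norm (expC3 n) \<le> 27 * 28 * 28 * norm (real n ^ 2)"
    using eventually_ge_at_top[of "2::nat"]
  proof eventually_elim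
    case (elim n)
    then have lower: "real n ^ 2 / 48 \<le> expC3 n"
      by (rule expC3_ge_quadratic)
    moreover have "0 \<le> expC3 n"
      using lower zero_le_power2[of "real n"] by linarith
    ultimately show ?case
      using expC3_le_quadratic[of n] elim by simp
  qed
qed simp_all

end
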